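(* The size $g^*$ of the smallest grammar satisfies, for each edit type $\ast\in\{\mathrm{sub},\mathrm{ins},\mathrm{del}\}$: $\mathsf{MS}_{\ast}(g^*,n)\le 2$ and $\mathsf{AS}_{\ast}(g^*,n)\le g^*$; i.e. $g^*(T')\le 2g^*(T)$ for every string $T$ of length $n$ and every $T'$ obtained from $T$ by one edit of that type.
   Context: Strings are over an alphabet $\Sigma$; $\mathsf{ed}$ is the edit distance. $\mathsf{MS}_{\mathrm{sub}}(C,n)=\max_{T\in\Sigma^n}\{C(T')/C(T): T'\in\Sigma^n,\ \mathsf{ed}(T,T')=1\}$, with $\mathsf{MS}_{\mathrm{ins}},\mathsf{MS}_{\mathrm{del}}$ analogous for $T'$ of length $n+1$, resp. $n-1$, and $\mathsf{AS}_\ast$ analogous with $C(T')-C(T)$. A grammar compression of $T$ is a context-free grammar deriving exactly the single string $T$; its size is the total length of the right-hand sides of its productions. $g^*(T)$ is the minimum size of a grammar compression of $T$. *)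

theory Defs
  imports Main
begin

fun ed :: "'a list \<Rightarrow> 'a list \<Rightarrow> nat" where
  "ed [] ys = length ys"
| "ed xs [] = length xs"
| "ed (x # xs) (y # ys) =
     min (min (ed xs (y # ys) + 1) (ed (x # xs) ys + 1))
         (ed xs ys + (if x = y then 0 else 1))"

datatype 'a sym = NT nat | Tm 'a

type_synonym 'a grammar = "(nat \<times> 'a sym list) list"

definition cfg_step :: "'a grammar \<Rightarrow> 'a sym list \<Rightarrow> 'a sym list \<Rightarrow> bool" where
  "cfg_step P u v \<longleftrightarrow>
     (\<exists>l A r alpha. (A, alpha) \<in> set P \<and> u = l @ [NT A] @ r \<and> v = l @ alpha @ r)"

definition cfg_lang :: "'a grammar \<Rightarrow> nat \<Rightarrow> 'a list set" where
  "cfg_lang P S = {w. (cfg_step P)\<^sup>*\<^sup>* [NT S] (map Tm w)}"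

definition gsize :: "'a grammar \<Rightarrow> nat" where
  "gsize P = (\<Sum>p\<leftarrow>P. length (snd p))"

definition is_grammar_compression :: "'a grammar \<Rightarrow> nat \<Rightarrow> 'a list \<Rightarrow> bool" where
  "is_grammar_compression P S T \<longleftrightarrow> cfg_lang P S = {T}"

definition gstar :: "'a list \<Rightarrow> nat" where
  "gstar T = (LEAST k. \<exists>P S. is_grammar_compression P S T \<and> gsize P = k)"

end

theory Submission
  imports Defs
begin

(* A smallest grammar for T = x a y contains a subgrammar that keeps one right-hand side for every
   productive nonterminal, chosen so that right-hand sides only mention nonterminals of smaller
   height. This subgrammar still derives T, and its derivation tree visits every nonterminal at most
   once on the path from the root to the edited position. A grammar for x r y consists of a renamed
   copy of the subgrammar below the start symbol together with one new copy of every production on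
   that path, in which the child on the path is replaced by its new copy and the leaf a by r. Its
   size is at most 2 g*(T) + |r| - 2, and a single edit needs |r| <= 2 because an insertion can be
   merged with a neighbouring symbol. *)

lemma concat_eq_append_ConsD:
  "concat ws = x @ a # y \<Longrightarrow>
   \<exists>ws1 u v ws2. ws = ws1 @ (u @ a # v) # ws2 \<and> x = concat ws1 @ u \<and> y = v @ concat ws2"
proof (induction ws arbitrary: x)
  case Nil
  then show ?case by simp
next
  case (Cons w ws)
  from Cons.prems consider us where "w = x @ us" "us @ concat ws = a # y"
    | us where "w @ us = x" "concat ws = us @ a # y"
    by (auto simp: append_eq_append_conv2)
  then show ?case
  proof cases
    case (1 us)
    show ?thesis
    proof (cases us)
      case Nil
      with 1 Cons.IH[of "[]"] obtain ws1 u v ws2 where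
        "ws = ws1 @ (u @ a # v) # ws2" "[] = concat ws1 @ u" "y = v @ concat ws2"
        by auto
      with 1 show ?thesis by (intro exI[of _ "w # ws1"] exI[of _ u] exI[of _ v] exI[of _ ws2]) auto
    next
      case (Cons c v)
      with 1 show ?thesis by (intro exI[of _ "[]"] exI[of _ x] exI[of _ v] exI[of _ ws]) auto
    qed
  next
    case (2 us)
    with Cons.IH obtain ws1 u v ws2 where
      "ws = ws1 @ (u @ a # v) # ws2" "us = concat ws1 @ u" "y = v @ concat ws2"
      by blast
    with 2 show ?thesis by (intro exI[of _ "w # ws1"] exI[of _ u] exI[of _ v] exI[of _ ws2]) auto
  qed
qed

lemma list_all2_append_Cons2E:
  assumes "list_all2 P xs (ys @ z # zs)"
  obtains xs1 x xs2 where "xs = xs1 @ x # xs2" "list_all2 P xs1 ys" "P x z" "list_all2 P xs2 zs"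
  using assms by (auto simp: list_all2_append2 list_all2_Cons2)

section \<open>Big-step derivations\<close>

inductive derives :: "(nat \<times> 'a sym list) set \<Rightarrow> 'a sym \<Rightarrow> 'a list \<Rightarrow> bool" for R where
  derives_Tm: "derives R (Tm a) [a]"
| derives_NT: "(A, \<alpha>) \<in> R \<Longrightarrow> list_all2 (derives R) \<alpha> ws \<Longrightarrow> derives R (NT A) (concat ws)"

lemma derives_Tm_iff [simp]: "derives R (Tm a) w \<longleftrightarrow> w = [a]"
  by (auto elim: derives.cases intro: derives_Tm)

lemma derives_NT_iff:
  "derives R (NT A) w \<longleftrightarrow> (\<exists>\<alpha> ws. (A, \<alpha>) \<in> R \<and> list_all2 (derives R) \<alpha> ws \<and> w = concat ws)"
  by (subst derives.simps) auto

lemma derives_mono: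
  assumes "derives R s w" and "R \<subseteq> R'"
  shows "derives R' s w"
  using assms(1) by induction (auto intro!: derives_NT elim: list_all2_mono simp: subsetD[OF assms(2)])

lemma derives_unique:
  assumes "single_valued R" and "derives R s w" and "derives R s w'"
  shows "w = w'"
  using assms(2,3)
proof (induction arbitrary: w')
  case (derives_Tm a)
  then show ?case by simp
next
  case (derives_NT A \<alpha> ws)
  from derives_NT.prems obtain \<beta> ws' where
    \<beta>: "(A, \<beta>) \<in> R" "list_all2 (derives R) \<beta> ws'" "w' = concat ws'"
    by (auto simp: derives_NT_iff)
  with derives_NT(1) assms(1) have "\<beta> = \<alpha>"
    by (auto dest: single_valuedD)
  with derives_NT(2) \<beta>(2) have "ws = ws'"
    by (auto simp: list_all2_conv_all_nth intro: nth_equalityI)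
  with \<beta>(3) show ?case by simp
qed

lemma cfg_step_in_context:
  assumes "cfg_step G u v"
  shows "cfg_step G (l @ u @ r) (l @ v @ r)"
proof -
  from assms obtain l' A r' \<alpha> where "(A, \<alpha>) \<in> set G" "u = l' @ [NT A] @ r'" "v = l' @ \<alpha> @ r'"
    unfolding cfg_step_def by blast
  then show ?thesis
    unfolding cfg_step_def by (intro exI[of _ "l @ l'"] exI[of _ A] exI[of _ "r' @ r"] exI[of _ \<alpha>]) simp
qed

lemma cfg_steps_in_context:
  "(cfg_step G)\<^sup>*\<^sup>* u v \<Longrightarrow> (cfg_step G)\<^sup>*\<^sup>* (l @ u @ r) (l @ v @ r)"
  by (induction rule: rtranclp_induct) (auto intro: rtranclp.rtrancl_into_rtrancl cfg_step_in_context)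

lemma cfg_steps_append:
  assumes "(cfg_step G)\<^sup>*\<^sup>* u u'" and "(cfg_step G)\<^sup>*\<^sup>* v v'"
  shows "(cfg_step G)\<^sup>*\<^sup>* (u @ v) (u' @ v')"
  using cfg_steps_in_context[OF assms(1), of "[]" v] cfg_steps_in_context[OF assms(2), of u' "[]"]
  by simp

lemma derives_imp_cfg_steps: "derives (set G) s w \<Longrightarrow> (cfg_step G)\<^sup>*\<^sup>* [s] (map Tm w)"
proof (induction rule: derives.induct)
  case (derives_Tm a)
  then show ?case by simp
next
  case (derives_NT A \<alpha> ws)
  have "cfg_step G [NT A] \<alpha>"
    using derives_NT(1) unfolding cfg_step_def by force
  moreover have "(cfg_step G)\<^sup>*\<^sup>* \<alpha> (map Tm (concat ws))"
    using derives_NT(2)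
  proof (induction rule: list_all2_induct)
    case Nil
    then show ?case by simp
  next
    case (Cons s \<alpha> w ws)
    then show ?case
      using cfg_steps_append[of G "[s]" "map Tm w" \<alpha> "map Tm (concat ws)"] by simp
  qed
  ultimately show ?case by (rule converse_rtranclp_into_rtranclp)
qed

lemma cfg_steps_imp_derives:
  assumes "(cfg_step G)\<^sup>*\<^sup>* u (map Tm w)"
  shows "\<exists>ws. list_all2 (derives (set G)) u ws \<and> w = concat ws"
  using assms
proof (induction rule: converse_rtranclp_induct)
  case base
  have "list_all2 (derives (set G)) (map Tm w) (map (\<lambda>a. [a]) w)"
    by (simp add: list_all2_map1 list_all2_map2 list.rel_refl)
  then show ?case by (intro exI[of _ "map (\<lambda>a. [a]) w"]) (simp add: concat_map_singleton)
next
  case (step u v)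
  from step.hyps(1) obtain l A r \<alpha> where
    A: "(A, \<alpha>) \<in> set G" "u = l @ NT A # r" "v = l @ \<alpha> @ r"
    unfolding cfg_step_def by auto
  from step.IH A(3) obtain ws where "list_all2 (derives (set G)) (l @ \<alpha> @ r) ws" "w = concat ws"
    by blast
  then obtain ws1 ws2 ws3 where
    ws: "w = concat (ws1 @ ws2 @ ws3)" "list_all2 (derives (set G)) l ws1"
      "list_all2 (derives (set G)) \<alpha> ws2" "list_all2 (derives (set G)) r ws3"
    unfolding list_all2_append1 by blast
  have "derives (set G) (NT A) (concat ws2)"
    using A(1) ws(3) by (rule derives_NT)
  with ws(2,4) A(2) have "list_all2 (derives (set G)) u (ws1 @ concat ws2 # ws3)"
    by (simp add: list_all2_appendI)
  with ws(1) show ?case by auto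
qed

lemma cfg_lang_eq_derives: "cfg_lang G S = {w. derives (set G) (NT S) w}"
proof -
  have "derives (set G) (NT S) w" if "(cfg_step G)\<^sup>*\<^sup>* [NT S] (map Tm w)" for w
  proof -
    from cfg_steps_imp_derives[OF that] obtain ws where
      "list_all2 (derives (set G)) [NT S] ws" "w = concat ws"
      by blast
    then show ?thesis by (cases ws) auto
  qed
  then show ?thesis
    unfolding cfg_lang_def using derives_imp_cfg_steps by blast
qed

lemma single_valued_Un:
  "single_valued R \<Longrightarrow> single_valued R' \<Longrightarrow> Domain R \<inter> Domain R' = {} \<Longrightarrow> single_valued (R \<union> R')"
  by (auto simp: single_valued_def)

lemma single_valued_insert_fresh:
  "single_valued R \<Longrightarrow> x \<notin> Domain R \<Longrightarrow> single_valued (insert (x, y) R)"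
  by (auto simp: single_valued_def)

lemma single_valued_is_grammar_compression:
  assumes "single_valued (set G)" and "derives (set G) (NT S) w"
  shows "is_grammar_compression G S w"
  unfolding is_grammar_compression_def cfg_lang_eq_derives
  using assms(2) derives_unique[OF assms] by blast

lemma gsize_Nil [simp]: "gsize [] = 0"
  and gsize_Cons [simp]: "gsize (p # G) = length (snd p) + gsize G"
  and gsize_append [simp]: "gsize (G @ H) = gsize G + gsize H"
  by (simp_all add: gsize_def)

lemma gstar_attained: "\<exists>P S. is_grammar_compression P S T \<and> gsize P = gstar T"
proof -
  have "derives (set [(0, map Tm T)]) (NT 0) (concat (map (\<lambda>a. [a]) T))"
    by (rule derives_NT) (auto simp: list_all2_map1 list_all2_map2 list.rel_refl)
  then have "is_grammar_compression [(0, map Tm T)] 0 T"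
    by (intro single_valued_is_grammar_compression) (auto simp: single_valued_def concat_map_singleton)
  then have "\<exists>k P S. is_grammar_compression P S T \<and> gsize P = k"
    by blast
  then show ?thesis
    unfolding gstar_def by (rule LeastI_ex)
qed

lemma gstar_le: "is_grammar_compression P S T \<Longrightarrow> gstar T \<le> gsize P"
  unfolding gstar_def by (rule Least_le) blast

section \<open>Path copying in ranked grammars\<close>

fun rename_sym :: "(nat \<Rightarrow> nat) \<Rightarrow> 'a sym \<Rightarrow> 'a sym" where
  "rename_sym f (NT A) = NT (f A)"
| "rename_sym f (Tm a) = Tm a"

locale ranked_grammar =
  fixes N :: "nat set" and \<rho> :: "nat \<Rightarrow> 'a sym list" and h :: "nat \<Rightarrow> nat"
  assumes finite_N: "finite N"
    and ranked: "A \<in> N \<Longrightarrow> NT B \<in> set (\<rho> A) \<Longrightarrow> B \<in> N \<and> h B < h A"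
begin

definition rules :: "(nat \<times> 'a sym list) set" where
  "rules = (\<lambda>A. (A, \<rho> A)) ` N"

lemma derives_rules_NTE:
  assumes "derives rules (NT A) w"
  obtains ws where "A \<in> N" "list_all2 (derives rules) (\<rho> A) ws" "w = concat ws"
  using assms by (auto simp: rules_def derives_NT_iff)

lemma derives_rules_exists: "A \<in> N \<Longrightarrow> \<exists>w. derives rules (NT A) w"
proof (induction "h A" arbitrary: A rule: less_induct)
  case less
  have "\<exists>w. derives rules s w" if "s \<in> set (\<rho> A)" for s
  proof (cases s)
    case (NT B)
    with that less.prems ranked have "B \<in> N" "h B < h A" by auto
    with NT less.hyps show ?thesis by blast
  qed auto
  then obtain f where "\<forall>s\<in>set (\<rho> A). derives rules s (f s)"
    by metis
  then have "list_all2 (derives rules) (\<rho> A) (map f (\<rho> A))"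
    by (simp add: list_all2_map2 list.rel_refl_strong)
  moreover have "(A, \<rho> A) \<in> rules"
    using less.prems by (simp add: rules_def)
  ultimately show ?case by (blast intro: derives_NT)
qed

(* The nonterminals below S are renamed to even numbers, leaving the odd number 2 * A + 1 free
   for a modified copy of a nonterminal A on the edited path. *)
definition lower_copy :: "nat \<Rightarrow> 'a grammar" where
  "lower_copy S = map (\<lambda>A. (2 * A, map (rename_sym ((*) 2)) (\<rho> A))) (sorted_list_of_set {A \<in> N. h A < h S})"

lemma set_lower_copy:
  "set (lower_copy S) = (\<lambda>A. (2 * A, map (rename_sym ((*) 2)) (\<rho> A))) ` {A \<in> N. h A < h S}"
  by (simp add: lower_copy_def finite_N)

lemma single_valued_lower_copy: "single_valued (set (lower_copy S))"
  by (auto simp: set_lower_copy single_valued_def)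

lemma gsize_lower_copy:
  assumes "S \<in> N"
  shows "gsize (lower_copy S) + length (\<rho> S) \<le> (\<Sum>A\<in>N. length (\<rho> A))"
proof -
  have "gsize (lower_copy S) = (\<Sum>A\<in>{A \<in> N. h A < h S}. length (\<rho> A))"
    by (simp add: lower_copy_def gsize_def comp_def sum_list_distinct_conv_sum_set finite_N)
  also have "\<dots> \<le> (\<Sum>A\<in>N - {S}. length (\<rho> A))"
    by (rule sum_mono2) (auto simp: finite_N)
  finally show ?thesis
    using sum.remove[OF finite_N assms, of "\<lambda>A. length (\<rho> A)"] by linarith
qed

lemma derives_lower_copy:
  assumes "derives rules s w" and "set (lower_copy S) \<subseteq> G" and "\<forall>B. s = NT B \<longrightarrow> h B < h S"
  shows "derives G (rename_sym ((*) 2) s) w"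
  using assms
proof induction
  case (derives_Tm a)
  then show ?case by simp
next
  case (derives_NT A \<alpha> ws)
  from derives_NT(1) have A: "A \<in> N" "\<alpha> = \<rho> A"
    by (auto simp: rules_def)
  with derives_NT.prems have "(2 * A, map (rename_sym ((*) 2)) \<alpha>) \<in> G"
    by (auto simp: set_lower_copy)
  moreover have "list_all2 (derives G) (map (rename_sym ((*) 2)) \<alpha>) ws"
    unfolding list_all2_map1 using derives_NT(2)
  proof (rule list.rel_mono_strong)
    fix s w
    assume "s \<in> set \<alpha>" and IH: "derives rules s w \<and>
      (set (lower_copy S) \<subseteq> G \<longrightarrow> (\<forall>B. s = NT B \<longrightarrow> h B < h S) \<longrightarrow> derives G (rename_sym ((*) 2) s) w)"
    with A ranked derives_NT.prems have "\<forall>B. s = NT B \<longrightarrow> h B < h S"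
      by fastforce
    with IH derives_NT.prems(1) show "derives G (rename_sym ((*) 2) s) w"
      by blast
  qed
  ultimately have "derives G (NT (2 * A)) (concat ws)"
    by (rule derives.derives_NT)
  then show ?case by simp
qed

(* M holds the modified copies of the nonterminals D on the path from A to the edited position:
   each costs as much as the original rule, except that the edited leaf adds |r| - 1. *)
definition path_copy :: "nat \<Rightarrow> 'a list \<Rightarrow> nat \<Rightarrow> 'a list \<Rightarrow> bool" where
  "path_copy S r A z \<longleftrightarrow> (\<exists>M D.
     derives (set (lower_copy S @ M)) (NT (2 * A + 1)) z \<and> single_valued (set M) \<and>
     fst ` set M \<subseteq> (\<lambda>B. 2 * B + 1) ` D \<and> D \<subseteq> {B \<in> N. h B \<le> h A} \<and>
     gsize M + 1 \<le> (\<Sum>B\<in>D. length (\<rho> B)) + length r)"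

lemma list_all2_derives_lower_copy:
  assumes "A \<in> N" and "h A \<le> h S" and "set \<alpha> \<subseteq> set (\<rho> A)"
    and "list_all2 (derives rules) \<alpha> ws" and "set (lower_copy S) \<subseteq> G"
  shows "list_all2 (derives G) (map (rename_sym ((*) 2)) \<alpha>) ws"
  unfolding list_all2_map1 using assms(4)
proof (rule list.rel_mono_strong)
  fix s w
  assume "s \<in> set \<alpha>" and "derives rules s w"
  moreover have "\<forall>B. s = NT B \<longrightarrow> h B < h S"
    using ranked assms(1-3) \<open>s \<in> set \<alpha>\<close> by fastforce
  ultimately show "derives G (rename_sym ((*) 2) s) w"
    using derives_lower_copy assms(5) by blast
qed

lemma path_copy_leaf:
  assumes "A \<in> N" and "h A \<le> h S" and "\<rho> A = \<alpha>1 @ Tm a # \<alpha>2"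
    and "list_all2 (derives rules) \<alpha>1 ws1" and "list_all2 (derives rules) \<alpha>2 ws2"
  shows "path_copy S r A (concat ws1 @ r @ concat ws2)"
proof -
  let ?ren = "map (rename_sym ((*) 2))"
  define M where "M = [(2 * A + 1, ?ren \<alpha>1 @ map Tm r @ ?ren \<alpha>2)]"
  let ?G = "set (lower_copy S @ M)"
  have "(2 * A + 1, ?ren \<alpha>1 @ map Tm r @ ?ren \<alpha>2) \<in> ?G"
    by (simp add: M_def)
  moreover have "list_all2 (derives ?G) (?ren \<alpha>1 @ map Tm r @ ?ren \<alpha>2) (ws1 @ map (\<lambda>c. [c]) r @ ws2)"
    using list_all2_derives_lower_copy[OF assms(1,2) _ assms(4), of ?G]
      list_all2_derives_lower_copy[OF assms(1,2) _ assms(5), of ?G] assms(3)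
    by (intro list_all2_appendI) (auto simp: list_all2_map1 list_all2_map2 list.rel_refl)
  ultimately have "derives ?G (NT (2 * A + 1)) (concat (ws1 @ map (\<lambda>c. [c]) r @ ws2))"
    by (rule derives_NT)
  then have "derives ?G (NT (2 * A + 1)) (concat ws1 @ r @ concat ws2)"
    by (simp add: concat_map_singleton)
  moreover have "gsize M + 1 \<le> (\<Sum>B\<in>{A}. length (\<rho> B)) + length r"
    using assms(3) by (simp add: M_def)
  ultimately show ?thesis
    unfolding path_copy_def using assms(1)
    by (intro exI[of _ M] exI[of _ "{A}"]) (auto simp: M_def single_valued_def)
qed

lemma path_copy_step:
  assumes "A \<in> N" and "h A \<le> h S" and "\<rho> A = \<alpha>1 @ NT B # \<alpha>2"
    and "list_all2 (derives rules) \<alpha>1 ws1" and "list_all2 (derives rules) \<alpha>2 ws2"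
    and "path_copy S r B z"
  shows "path_copy S r A (concat ws1 @ z @ concat ws2)"
proof -
  let ?ren = "map (rename_sym ((*) 2))"
  obtain M D where M: "derives (set (lower_copy S @ M)) (NT (2 * B + 1)) z"
    "single_valued (set M)" "fst ` set M \<subseteq> (\<lambda>B. 2 * B + 1) ` D"
    "D \<subseteq> {C \<in> N. h C \<le> h B}" "gsize M + 1 \<le> (\<Sum>C\<in>D. length (\<rho> C)) + length r"
    using assms(6) unfolding path_copy_def by blast
  have "h B < h A"
    using ranked[OF assms(1)] assms(3) by simp
  with M(4) have "A \<notin> D" by auto
  define M' where "M' = (2 * A + 1, ?ren \<alpha>1 @ NT (2 * B + 1) # ?ren \<alpha>2) # M"
  let ?G = "set (lower_copy S @ M')"
  have "(2 * A + 1, ?ren \<alpha>1 @ NT (2 * B + 1) # ?ren \<alpha>2) \<in> ?G"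
    by (simp add: M'_def)
  moreover have "derives ?G (NT (2 * B + 1)) z"
    using M(1) by (rule derives_mono) (auto simp: M'_def)
  then have "list_all2 (derives ?G) (?ren \<alpha>1 @ NT (2 * B + 1) # ?ren \<alpha>2) (ws1 @ z # ws2)"
    using list_all2_derives_lower_copy[OF assms(1,2) _ assms(4), of ?G]
      list_all2_derives_lower_copy[OF assms(1,2) _ assms(5), of ?G] assms(3)
    by (intro list_all2_appendI) auto
  ultimately have "derives ?G (NT (2 * A + 1)) (concat (ws1 @ z # ws2))"
    by (rule derives_NT)
  then have "derives ?G (NT (2 * A + 1)) (concat ws1 @ z @ concat ws2)"
    by simp
  moreover have "2 * A + 1 \<notin> Domain (set M)"
    using M(3) \<open>A \<notin> D\<close> by (force simp: Domain_fst)
  with M(2) have "single_valued (set M')"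
    unfolding M'_def by (simp add: single_valued_insert_fresh)
  moreover have "fst ` set M' \<subseteq> (\<lambda>C. 2 * C + 1) ` insert A D"
    using M(3) by (auto simp: M'_def)
  moreover have "insert A D \<subseteq> {C \<in> N. h C \<le> h A}"
    using M(4) \<open>h B < h A\<close> assms(1) by auto
  moreover have "finite D"
    by (rule finite_subset[OF M(4)]) (simp add: finite_N)
  with M(5) \<open>A \<notin> D\<close> assms(3)
  have "gsize M' + 1 \<le> (\<Sum>C\<in>insert A D. length (\<rho> C)) + length r"
    by (simp add: M'_def)
  ultimately show ?thesis
    unfolding path_copy_def by (intro exI[of _ M'] exI[of _ "insert A D"]) blast
qed

lemma path_copy_derives:
  assumes "derives rules s w" and "s = NT A" and "w = x @ a # y" and "h A \<le> h S"
  shows "path_copy S r A (x @ r @ y)"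
  using assms
proof (induction arbitrary: A x y)
  case (derives_Tm b)
  then show ?case by simp
next
  case (derives_NT A' \<alpha> ws)
  from derives_NT(1) derives_NT.prems(1) have A: "A \<in> N" "\<alpha> = \<rho> A"
    by (auto simp: rules_def)
  obtain ws1 u v ws2 where
    ws: "ws = ws1 @ (u @ a # v) # ws2" "x = concat ws1 @ u" "y = v @ concat ws2"
    using concat_eq_append_ConsD[OF derives_NT.prems(2)] by blast
  let ?IH = "\<lambda>s w. derives rules s w \<and> (\<forall>B. s = NT B \<longrightarrow>
    (\<forall>x y. w = x @ a # y \<longrightarrow> h B \<le> h S \<longrightarrow> path_copy S r B (x @ r @ y)))"
  have "list_all2 ?IH (\<rho> A) (ws1 @ (u @ a # v) # ws2)"
    using derives_NT(2) unfolding A(2) ws(1) .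
  then obtain \<alpha>1 s \<alpha>2 where
    \<alpha>: "\<rho> A = \<alpha>1 @ s # \<alpha>2" and IH: "list_all2 ?IH \<alpha>1 ws1" "?IH s (u @ a # v)" "list_all2 ?IH \<alpha>2 ws2"
    by (rule list_all2_append_Cons2E)
  have ws1: "list_all2 (derives rules) \<alpha>1 ws1"
    by (rule list_all2_mono[OF IH(1)]) blast
  have ws2: "list_all2 (derives rules) \<alpha>2 ws2"
    by (rule list_all2_mono[OF IH(3)]) blast
  show ?case
  proof (cases s)
    case (Tm b)
    with IH(2) have "u = []" "v = []" "b = a"
      by (cases u; simp)+
    with path_copy_leaf[OF A(1) derives_NT.prems(3) _ ws1 ws2] \<alpha> Tm ws show ?thesis
      by simp
  next
    case (NT B)
    with ranked[OF A(1)] \<alpha> have "h B < h A" by simp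
    from IH(2) NT have "\<And>x y. u @ a # v = x @ a # y \<Longrightarrow> h B \<le> h S \<Longrightarrow> path_copy S r B (x @ r @ y)"
      by blast
    with \<open>h B < h A\<close> derives_NT.prems(3) have "path_copy S r B (u @ r @ v)"
      by simp
    from path_copy_step[OF A(1) derives_NT.prems(3) \<alpha>[unfolded NT] ws1 ws2 this] ws show ?thesis
      by simp
  qed
qed

lemma gstar_replace_le_sum_rhs:
  assumes "S \<in> N" and "derives rules (NT S) (x @ a # y)"
  shows "gstar (x @ r @ y) + 2 \<le> 2 * (\<Sum>A\<in>N. length (\<rho> A)) + length r"
proof -
  obtain M D where M: "derives (set (lower_copy S @ M)) (NT (2 * S + 1)) (x @ r @ y)"
    "single_valued (set M)" "fst ` set M \<subseteq> (\<lambda>B. 2 * B + 1) ` D"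
    "D \<subseteq> {B \<in> N. h B \<le> h S}" "gsize M + 1 \<le> (\<Sum>B\<in>D. length (\<rho> B)) + length r"
    using path_copy_derives[OF assms(2) refl refl order_refl] unfolding path_copy_def by blast
  have "Domain (set (lower_copy S)) \<subseteq> {n. even n}"
    by (auto simp: set_lower_copy)
  moreover have "Domain (set M) \<subseteq> {n. odd n}"
    using M(3) by (auto simp: Domain_fst)
  ultimately have "Domain (set (lower_copy S)) \<inter> Domain (set M) = {}"
    by blast
  then have "single_valued (set (lower_copy S @ M))"
    using single_valued_Un[OF single_valued_lower_copy M(2)] by simp
  then have "gstar (x @ r @ y) \<le> gsize (lower_copy S @ M)"
    using M(1) by (intro gstar_le single_valued_is_grammar_compression)
  moreover have "(\<Sum>B\<in>D. length (\<rho> B)) \<le> (\<Sum>A\<in>N. length (\<rho> A))"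
    using M(4) by (intro sum_mono2[OF finite_N]) auto
  moreover obtain ws where "list_all2 (derives rules) (\<rho> S) ws" "x @ a # y = concat ws"
    using assms(2) by (rule derives_rules_NTE)
  then have "1 \<le> length (\<rho> S)"
    by (cases "\<rho> S") auto
  ultimately show ?thesis
    using gsize_lower_copy[OF assms(1)] M(5) by simp
qed

end

section \<open>Canonical ranked subgrammars\<close>

fun productive_upto :: "'a grammar \<Rightarrow> nat \<Rightarrow> nat set" where
  "productive_upto P 0 = {}"
| "productive_upto P (Suc k) =
     {A. \<exists>\<alpha>. (A, \<alpha>) \<in> set P \<and> (\<forall>B. NT B \<in> set \<alpha> \<longrightarrow> B \<in> productive_upto P k)}"

definition productive :: "'a grammar \<Rightarrow> nat \<Rightarrow> bool" where
  "productive P A \<longleftrightarrow> (\<exists>k. A \<in> productive_upto P k)"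

definition height :: "'a grammar \<Rightarrow> nat \<Rightarrow> nat" where
  "height P A = (LEAST k. A \<in> productive_upto P k)"

definition canonical_rhs :: "'a grammar \<Rightarrow> nat \<Rightarrow> 'a sym list" where
  "canonical_rhs P A = (SOME \<alpha>. (A, \<alpha>) \<in> set P \<and>
     (\<forall>B. NT B \<in> set \<alpha> \<longrightarrow> B \<in> productive_upto P (height P A - 1)))"

lemma productive_upto_mono:
  assumes "k \<le> k'"
  shows "productive_upto P k \<subseteq> productive_upto P k'"
proof -
  have "productive_upto P k \<subseteq> productive_upto P (Suc k)" for k
    by (induction k) fastforce+
  then show ?thesis
    using assms by (rule lift_Suc_mono_le)
qed

lemma derives_productive:
  assumes "derives (set P) s w" and "s = NT A"
  shows "productive P A"
  using assms
proof (induction arbitrary: A)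
  case (derives_Tm a)
  then show ?case by simp
next
  case (derives_NT A' \<alpha> ws)
  let ?Bs = "{B. NT B \<in> set \<alpha>}"
  have "\<forall>B\<in>?Bs. \<exists>k. B \<in> productive_upto P k"
  proof
    fix B
    assume "B \<in> ?Bs"
    then obtain i where "i < length \<alpha>" "\<alpha> ! i = NT B"
      by (auto simp: in_set_conv_nth)
    with derives_NT(2) show "\<exists>k. B \<in> productive_upto P k"
      by (auto simp: list_all2_conv_all_nth productive_def)
  qed
  then obtain f where f: "\<forall>B\<in>?Bs. B \<in> productive_upto P (f B)"
    by metis
  have "finite ?Bs"
    using finite_vimageI[of "set \<alpha>" NT] by (simp add: vimage_def inj_def)
  then have "\<forall>B\<in>?Bs. B \<in> productive_upto P (\<Sum>B\<in>?Bs. f B)"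
    using f productive_upto_mono member_le_sum by (metis (no_types, lifting) subsetD zero_le)
  with derives_NT(1) derives_NT.prems have "A \<in> productive_upto P (Suc (\<Sum>B\<in>?Bs. f B))"
    by auto
  then show ?case
    unfolding productive_def by blast
qed

lemma canonical_rhs:
  assumes "productive P A"
  shows "(A, canonical_rhs P A) \<in> set P"
    and "NT B \<in> set (canonical_rhs P A) \<Longrightarrow> productive P B \<and> height P B < height P A"
proof -
  have A: "A \<in> productive_upto P (height P A)"
    using assms unfolding productive_def height_def by (rule LeastI_ex)
  then obtain k where k: "height P A = Suc k"
    by (cases "height P A") auto
  with A have "\<exists>\<alpha>. (A, \<alpha>) \<in> set P \<and> (\<forall>B. NT B \<in> set \<alpha> \<longrightarrow> B \<in> productive_upto P (height P A - 1))"
    by auto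
  then have "(A, canonical_rhs P A) \<in> set P \<and>
      (\<forall>B. NT B \<in> set (canonical_rhs P A) \<longrightarrow> B \<in> productive_upto P (height P A - 1))"
    unfolding canonical_rhs_def by (rule someI_ex)
  then have rhs: "(A, canonical_rhs P A) \<in> set P \<and>
      (\<forall>B. NT B \<in> set (canonical_rhs P A) \<longrightarrow> B \<in> productive_upto P k)"
    by (simp add: k)
  then show "(A, canonical_rhs P A) \<in> set P"
    by blast
  assume "NT B \<in> set (canonical_rhs P A)"
  with rhs have "B \<in> productive_upto P k"
    by blast
  moreover from this have "height P B \<le> k"
    unfolding height_def by (rule Least_le)
  ultimately show "productive P B \<and> height P B < height P A"
    unfolding productive_def k by auto
qed

lemma ranked_grammar_canonical:
  "ranked_grammar {A. productive P A} (canonical_rhs P) (height P)"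
proof
  have "{A. productive P A} \<subseteq> fst ` set P"
    using canonical_rhs(1) by force
  then show "finite {A. productive P A}"
    using finite_subset by blast
qed (use canonical_rhs(2) in blast)

lemma sum_set_le_sum_list: "sum f (set xs) \<le> sum_list (map f xs)" for f :: "'a \<Rightarrow> nat"
  by (induction xs) (auto simp: sum.insert_if)

lemma sum_rhs_le_gsize:
  assumes "\<And>A. A \<in> X \<Longrightarrow> (A, \<rho> A) \<in> set P"
  shows "(\<Sum>A\<in>X. length (\<rho> A)) \<le> gsize P"
proof -
  have "(\<Sum>A\<in>X. length (\<rho> A)) = (\<Sum>p\<in>(\<lambda>A. (A, \<rho> A)) ` X. length (snd p))"
    by (simp add: sum.reindex inj_on_def)
  also have "\<dots> \<le> (\<Sum>p\<in>set P. length (snd p))"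
    using assms by (intro sum_mono2) auto
  also have "\<dots> \<le> gsize P"
    unfolding gsize_def by (rule sum_set_le_sum_list)
  finally show ?thesis .
qed

lemma gstar_replace_le: "gstar (x @ r @ y) + 2 \<le> 2 * gstar (x @ a # y) + length r"
proof -
  obtain P S where P: "is_grammar_compression P S (x @ a # y)" "gsize P = gstar (x @ a # y)"
    using gstar_attained by blast
  then have lang: "derives (set P) (NT S) w \<longleftrightarrow> w = x @ a # y" for w
    unfolding is_grammar_compression_def cfg_lang_eq_derives by auto
  interpret canon: ranked_grammar "{A. productive P A}" "canonical_rhs P" "height P"
    by (rule ranked_grammar_canonical)
  have S: "productive P S"
    using lang derives_productive by blast
  then obtain w where w: "derives canon.rules (NT S) w"
    using canon.derives_rules_exists by blast
  have "canon.rules \<subseteq> set P"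
    using canonical_rhs(1) by (auto simp: canon.rules_def)
  with w lang have "w = x @ a # y"
    using derives_mono by blast
  with S w have "gstar (x @ r @ y) + 2 \<le> 2 * (\<Sum>A | productive P A. length (canonical_rhs P A)) + length r"
    by (intro canon.gstar_replace_le_sum_rhs) auto
  moreover have "(\<Sum>A | productive P A. length (canonical_rhs P A)) \<le> gsize P"
    using canonical_rhs(1) by (intro sum_rhs_le_gsize) auto
  ultimately show ?thesis
    using P(2) by linarith
qed

lemma ed_eq_0_imp_eq: "ed xs ys = 0 \<Longrightarrow> xs = ys"
  by (induction xs ys rule: ed.induct) (auto split: if_splits simp: min_def)

lemma ed_eq_1_imp_edit:
  "ed xs ys = 1 \<Longrightarrow>
   \<exists>x u v y. xs = x @ u @ y \<and> ys = x @ v @ y \<and> length u \<le> 1 \<and> length v \<le> 1"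
proof (induction xs ys rule: ed.induct)
  case (1 ys)
  then show ?case by (intro exI[of _ "[]"] exI[of _ "[]"] exI[of _ ys]) auto
next
  case (2 a xs)
  then show ?case by (intro exI[of _ "[]"] exI[of _ "a # xs"] exI[of _ "[]"]) auto
next
  case (3 a xs b ys)
  then consider "ed xs (b # ys) = 0" | "ed (a # xs) ys = 0" | "a = b" "ed xs ys = 1" | "ed xs ys = 0"
    by (auto simp: min_def split: if_splits)
  then show ?case
  proof cases
    case 1
    then have "xs = b # ys" by (rule ed_eq_0_imp_eq)
    then show ?thesis by (intro exI[of _ "[]"] exI[of _ "[a]"] exI[of _ "[]"] exI[of _ xs]) auto
  next
    case 2
    then have "a # xs = ys" by (rule ed_eq_0_imp_eq)
    then show ?thesis by (intro exI[of _ "[]"] exI[of _ "[]"] exI[of _ "[b]"] exI[of _ "a # xs"]) auto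
  next
    case 3
    with "3.IH"(3) obtain x u v y where "xs = x @ u @ y" "ys = x @ v @ y" "length u \<le> 1" "length v \<le> 1"
      by blast
    with 3 show ?thesis by (intro exI[of _ "a # x"] exI[of _ u] exI[of _ v] exI[of _ y]) auto
  next
    case 4
    then have "xs = ys" by (rule ed_eq_0_imp_eq)
    then show ?thesis by (intro exI[of _ "[]"] exI[of _ "[a]"] exI[of _ "[b]"] exI[of _ xs]) auto
  qed
qed

(* An insertion is merged with a neighbouring symbol, which exists because T is nonempty. *)
lemma ed_eq_1_imp_replace:
  assumes "ed T T' = 1" and "T \<noteq> []"
  obtains x a y r where "T = x @ a # y" "T' = x @ r @ y" "length r \<le> 2"
proof -
  obtain x u v y where uv: "T = x @ u @ y" "T' = x @ v @ y" "length u \<le> 1" "length v \<le> 1"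
    using ed_eq_1_imp_edit[OF assms(1)] by blast
  show thesis
  proof (cases u)
    case (Cons a u')
    with uv that[of x a y v] show thesis by simp
  next
    case Nil
    show thesis
    proof (cases y)
      case (Cons c y')
      with uv Nil that[of x c y' "v @ [c]"] show thesis by simp
    next
      case y: Nil
      with uv Nil assms(2) obtain x' c where "x = x' @ [c]"
        by (cases x rule: rev_cases) auto
      with uv Nil y that[of x' c "[]" "c # v"] show thesis by simp
    qed
  qed
qed

lemma gstar_le_double_if_ed_eq_1:
  assumes "ed T T' = 1" and "T \<noteq> []"
  shows "gstar T' \<le> 2 * gstar T"
proof -
  obtain x a y r where "T = x @ a # y" "T' = x @ r @ y" "length r \<le> 2"
    using assms by (rule ed_eq_1_imp_replace)
  with gstar_replace_le[of x r y a] show ?thesis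
    by simp
qed

theorem mainTheorem18:
  fixes n :: nat and T T' :: "'a list"
  assumes "n \<ge> 1" and "length T = n" and "ed T T' = 1"
  shows "(length T' = n \<longrightarrow> gstar T' \<le> 2 * gstar T \<and> int (gstar T') - int (gstar T) \<le> int (gstar T))
       \<and> (length T' = n + 1 \<longrightarrow> gstar T' \<le> 2 * gstar T \<and> int (gstar T') - int (gstar T) \<le> int (gstar T))
       \<and> (length T' = n - 1 \<longrightarrow> gstar T' \<le> 2 * gstar T \<and> int (gstar T') - int (gstar T) \<le> int (gstar T))"
proof -
  have "T \<noteq> []"
    using assms(1,2) by auto
  with assms(3) have "gstar T' \<le> 2 * gstar T"
    by (rule gstar_le_double_if_ed_eq_1)
  then show ?thesis
    by simp
qed

end
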